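(* The assignment $(G,H)\mapsto\mathcal A_{lc}(G,H)$ is a functor from $(\text{Graphs})\times(\text{Graphs})$ to $\mathbb C$-algebras which is covariant in the first factor and contravariant in the second, where morphisms of graphs are the usual graph homomorphisms.
   Context: Graphs are finite with symmetric edge sets; write $v\sim w$ for adjacency; a graph homomorphism $\phi:G\to H$ is a map $V(G)\to V(H)$ with $v\sim w\Rightarrow\phi(v)\sim\phi(w)$. For graphs $G,H$, $\mathcal A_{lc}(G,H)$ is the unital complex algebra generated by $e_{v,x}$ ($v\in V(G)$, $x\in V(H)$) with relations: $\sum_{x}e_{v,x}=1$; $e_{v,x}^2=e_{v,x}$; $e_{v,x}e_{v,y}=0$ for $x\ne y$; $e_{v,x}e_{w,y}=0$ if $v\sim w$ and $x\not\sim y$; $e_{v,x}e_{w,y}=e_{w,y}e_{v,x}$ if $v\sim w$. *)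

theory Defs
  imports Complex_Main
begin

record 'a graph =
  verts :: "'a set"
  adj :: "'a \<Rightarrow> 'a \<Rightarrow> bool"

text \<open>Finite graph with symmetric edge relation (loops not excluded).\<close>
definition is_graph :: "'a graph \<Rightarrow> bool" where
  "is_graph G \<longleftrightarrow> finite (verts G)
     \<and> (\<forall>v w. adj G v w \<longrightarrow> v \<in> verts G \<and> w \<in> verts G)
     \<and> (\<forall>v w. adj G v w \<longrightarrow> adj G w v)"

definition graph_hom :: "('a \<Rightarrow> 'b) \<Rightarrow> 'a graph \<Rightarrow> 'b graph \<Rightarrow> bool" where
  "graph_hom \<phi> G H \<longleftrightarrow> (\<forall>v\<in>verts G. \<phi> v \<in> verts H)
     \<and> (\<forall>v w. adj G v w \<longrightarrow> adj H (\<phi> v) (\<phi> w))"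

text \<open>Elements of the free algebra are finitely supported complex functions on words.\<close>
type_synonym 'a fa = "'a list \<Rightarrow> complex"

definition fa_carrier :: "'a set \<Rightarrow> 'a fa set" where
  "fa_carrier S = {f. finite {w. f w \<noteq> 0} \<and> (\<forall>w. f w \<noteq> 0 \<longrightarrow> set w \<subseteq> S)}"

definition fa_zero :: "'a fa" where "fa_zero = (\<lambda>w. 0)"
definition fa_one :: "'a fa" where "fa_one = (\<lambda>w. if w = [] then 1 else 0)"
definition fa_gen :: "'a \<Rightarrow> 'a fa" where "fa_gen a = (\<lambda>w. if w = [a] then 1 else 0)"
definition fa_add :: "'a fa \<Rightarrow> 'a fa \<Rightarrow> 'a fa" where "fa_add f g = (\<lambda>w. f w + g w)"
definition fa_diff :: "'a fa \<Rightarrow> 'a fa \<Rightarrow> 'a fa" where "fa_diff f g = (\<lambda>w. f w - g w)"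
definition fa_smult :: "complex \<Rightarrow> 'a fa \<Rightarrow> 'a fa" where "fa_smult c f = (\<lambda>w. c * f w)"
definition fa_sum :: "('i \<Rightarrow> 'a fa) \<Rightarrow> 'i set \<Rightarrow> 'a fa" where
  "fa_sum F I = (\<lambda>w. \<Sum>i\<in>I. F i w)"
definition fa_mult :: "'a fa \<Rightarrow> 'a fa \<Rightarrow> 'a fa" where
  "fa_mult f g = (\<lambda>w. \<Sum>i\<le>length w. f (take i w) * g (drop i w))"

definition fa_word_prod :: "('a \<Rightarrow> 'b fa) \<Rightarrow> 'a list \<Rightarrow> 'b fa" where
  "fa_word_prod img w = foldr (\<lambda>a acc. fa_mult (img a) acc) w fa_one"

definition fa_extend :: "('a \<Rightarrow> 'b fa) \<Rightarrow> 'a fa \<Rightarrow> 'b fa" where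
  "fa_extend img f = fa_sum (\<lambda>w. fa_smult (f w) (fa_word_prod img w)) {w. f w \<noteq> 0}"

definition lc_relators :: "'g graph \<Rightarrow> 'h graph \<Rightarrow> ('g \<times> 'h) fa set" where
  "lc_relators G H =
     {fa_diff (fa_sum (\<lambda>x. fa_gen (v, x)) (verts H)) fa_one | v. v \<in> verts G}
   \<union> {fa_diff (fa_mult (fa_gen (v, x)) (fa_gen (v, x))) (fa_gen (v, x)) | v x.
        v \<in> verts G \<and> x \<in> verts H}
   \<union> {fa_mult (fa_gen (v, x)) (fa_gen (v, y)) | v x y.
        v \<in> verts G \<and> x \<in> verts H \<and> y \<in> verts H \<and> x \<noteq> y}
   \<union> {fa_mult (fa_gen (v, x)) (fa_gen (w, y)) | v w x y.
        adj G v w \<and> x \<in> verts H \<and> y \<in> verts H \<and> \<not> adj H x y}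
   \<union> {fa_diff (fa_mult (fa_gen (v, x)) (fa_gen (w, y))) (fa_mult (fa_gen (w, y)) (fa_gen (v, x))) | v w x y.
        adj G v w \<and> x \<in> verts H \<and> y \<in> verts H}"

inductive_set lc_ideal :: "'g graph \<Rightarrow> 'h graph \<Rightarrow> ('g \<times> 'h) fa set"
  for G :: "'g graph" and H :: "'h graph" where
  rel: "r \<in> lc_relators G H \<Longrightarrow> r \<in> lc_ideal G H"
| zero: "fa_zero \<in> lc_ideal G H"
| add: "f \<in> lc_ideal G H \<Longrightarrow> g \<in> lc_ideal G H \<Longrightarrow> fa_add f g \<in> lc_ideal G H"
| smult: "f \<in> lc_ideal G H \<Longrightarrow> fa_smult c f \<in> lc_ideal G H"
| lmult: "a \<in> fa_carrier (verts G \<times> verts H) \<Longrightarrow> f \<in> lc_ideal G H \<Longrightarrow> fa_mult a f \<in> lc_ideal G H"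
| rmult: "a \<in> fa_carrier (verts G \<times> verts H) \<Longrightarrow> f \<in> lc_ideal G H \<Longrightarrow> fa_mult f a \<in> lc_ideal G H"

text \<open>Equality in A_lc(G,H) of (representatives) f and g.\<close>
definition lc_equiv :: "'g graph \<Rightarrow> 'h graph \<Rightarrow> ('g \<times> 'h) fa \<Rightarrow> ('g \<times> 'h) fa \<Rightarrow> bool" where
  "lc_equiv G H f g \<longleftrightarrow> fa_diff f g \<in> lc_ideal G H"

text \<open>Morphism part: for graph homs phi : G -> G' and psi : H' -> H, the map
  A_lc(G,H) -> A_lc(G',H') given on generators by
  e_{v,x} |-> sum over y in V(H') with psi y = x of e_{phi v, y}.\<close>
definition lc_map :: "'h2 graph \<Rightarrow> ('g1 \<Rightarrow> 'g2) \<Rightarrow> ('h2 \<Rightarrow> 'h1)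
     \<Rightarrow> ('g1 \<times> 'h1) fa \<Rightarrow> ('g2 \<times> 'h2) fa" where
  "lc_map H' \<phi> \<psi> = fa_extend (\<lambda>(v, x). fa_sum (\<lambda>y. fa_gen (\<phi> v, y)) {y \<in> verts H'. \<psi> y = x})"

end

theory Submission
  imports Defs
begin

text \<open>The map sending \<open>e\<^sub>v\<^sub>,\<^sub>x\<close> to \<open>\<Sum>\<^bsub>\<psi> y = x\<^esub> e\<^sub>\<phi>\<^sub>v\<^sub>,\<^sub>y\<close> extends to a unital algebra
  homomorphism of free algebras. It sends every defining relator of \<open>A\<^sub>l\<^sub>c(G,H)\<close> into the ideal of
  \<open>A\<^sub>l\<^sub>c(G',H')\<close>: the row sums become row sums because the fibres of \<open>\<psi>\<close> partition \<open>V(H')\<close>,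
  the orthogonality and idempotence relators expand into sums of relators, and the relators
  indexed by an edge \<open>v \<sim> w\<close> expand into relators indexed by the edge \<open>\<phi> v \<sim> \<phi> w\<close> (for the
  non-edge relators this uses that \<open>\<psi>\<close> maps edges to edges). Functoriality already holds on the level of free algebras, since the
  fibres of \<open>\<psi>\<^sub>1 \<circ> \<psi>\<^sub>2\<close> are the unions of the \<open>\<psi>\<^sub>2\<close>-fibres over a \<open>\<psi>\<^sub>1\<close>-fibre.\<close>

subsection \<open>Words and multiplication\<close>

definition fa_word :: "'a list \<Rightarrow> 'a fa" where
  "fa_word u = (\<lambda>w. if w = u then 1 else 0)"

lemma fa_gen_eq_word: "fa_gen a = fa_word [a]"
  by (simp add: fa_gen_def fa_word_def)

lemma fa_one_eq_word: "fa_one = fa_word []"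
  by (simp add: fa_one_def fa_word_def)

lemma fa_mult_word: "fa_mult (fa_word u) (fa_word v) = fa_word (u @ v)"
proof (rule ext)
  fix w :: "'a list"
  have split: "(take i w = u \<and> drop i w = v) \<longleftrightarrow> (i = length u \<and> w = u @ v)"
    if "i \<le> length w" for i
    using that by (auto simp: min_def)
  have "fa_mult (fa_word u) (fa_word v) w = (\<Sum>i\<le>length w. if i = length u \<and> w = u @ v then 1 else 0)"
    unfolding fa_mult_def fa_word_def by (intro sum.cong refl) (use split in auto)
  then show "fa_mult (fa_word u) (fa_word v) w = fa_word (u @ v) w"
    by (auto simp: fa_word_def)
qed

lemma fa_mult_assoc: "fa_mult (fa_mult f g) h = fa_mult f (fa_mult g h)"
proof (rule ext)
  fix w :: "'a list"
  let ?n = "length w"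
  define F where "F j k = f (take j w) * g (take k (drop j w)) * h (drop (j + k) w)" for j k
  have "fa_mult (fa_mult f g) h w = (\<Sum>i\<le>?n. \<Sum>j\<le>i. F j (i - j))"
    unfolding fa_mult_def F_def
    by (intro sum.cong refl) (auto simp: sum_distrib_right min_def drop_take intro!: sum.cong)
  also have "\<dots> = (\<Sum>(j, k)\<in>{(j, k). j + k \<le> ?n}. F j k)"
    by (simp add: sum.triangle_reindex_eq)
  also have "\<dots> = (\<Sum>(j, k)\<in>Sigma {..?n} (\<lambda>j. {..?n - j}). F j k)"
    by (rule sum.cong) auto
  also have "\<dots> = (\<Sum>j\<le>?n. \<Sum>k\<le>?n - j. F j k)"
    by (rule sum.Sigma[symmetric]) auto
  also have "\<dots> = fa_mult f (fa_mult g h) w"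
    unfolding fa_mult_def F_def
    by (intro sum.cong refl) (auto simp: sum_distrib_left mult.assoc add.commute)
  finally show "fa_mult (fa_mult f g) h w = fa_mult f (fa_mult g h) w" .
qed

lemma fa_mult_one_left: "fa_mult fa_one f = f"
proof (rule ext)
  fix w :: "'a list"
  have "fa_mult fa_one f w = (\<Sum>i\<le>length w. if i = 0 then f w else 0)"
    unfolding fa_mult_def fa_one_def by (intro sum.cong refl) auto
  then show "fa_mult fa_one f w = f w" by simp
qed

lemma fa_mult_one_right: "fa_mult f fa_one = f"
proof (rule ext)
  fix w :: "'a list"
  have "fa_mult f fa_one w = (\<Sum>i\<le>length w. if i = length w then f w else 0)"
    unfolding fa_mult_def fa_one_def by (intro sum.cong refl) auto
  then show "fa_mult f fa_one w = f w" by simp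
qed

lemma fa_mult_sum_left: "fa_mult (fa_sum F I) g = fa_sum (\<lambda>i. fa_mult (F i) g) I"
  unfolding fa_mult_def fa_sum_def by (rule ext) (simp add: sum_distrib_right sum.swap[where A=I])

lemma fa_mult_sum_right: "fa_mult g (fa_sum F I) = fa_sum (\<lambda>i. fa_mult g (F i)) I"
  unfolding fa_mult_def fa_sum_def by (rule ext) (simp add: sum_distrib_left sum.swap[where A=I])

lemma fa_mult_smult_left: "fa_mult (fa_smult c f) g = fa_smult c (fa_mult f g)"
  unfolding fa_mult_def fa_smult_def by (rule ext) (simp add: sum_distrib_left mult.assoc)

lemma fa_mult_smult_right: "fa_mult f (fa_smult c g) = fa_smult c (fa_mult f g)"
  unfolding fa_mult_def fa_smult_def by (rule ext) (simp add: sum_distrib_left mult.left_commute)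

lemma fa_mult_sum_sum:
  "fa_mult (fa_sum F I) (fa_sum G J) = fa_sum (\<lambda>i. fa_sum (\<lambda>j. fa_mult (F i) (G j)) J) I"
  unfolding fa_mult_sum_left unfolding fa_mult_sum_right ..

lemma fa_smult_smult: "fa_smult a (fa_smult b f) = fa_smult (a * b) f"
  by (rule ext) (simp add: fa_smult_def)

lemma fa_smult_sum: "fa_smult c (fa_sum F I) = fa_sum (\<lambda>i. fa_smult c (F i)) I"
  by (rule ext) (simp add: fa_smult_def fa_sum_def sum_distrib_left)

lemma fa_diff_eq_add_smult: "fa_diff f g = fa_add f (fa_smult (-1) g)"
  by (rule ext) (simp add: fa_diff_def fa_add_def fa_smult_def)

lemma fa_diff_self: "fa_diff f f = fa_zero"
  by (rule ext) (simp add: fa_diff_def fa_zero_def)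

lemma fa_sum_empty: "fa_sum F {} = fa_zero"
  by (simp add: fa_sum_def fa_zero_def)

lemma fa_sum_insert: "finite I \<Longrightarrow> i \<notin> I \<Longrightarrow> fa_sum F (insert i I) = fa_add (F i) (fa_sum F I)"
  by (rule ext) (simp add: fa_sum_def fa_add_def)

lemma fa_sum_diff: "fa_sum (\<lambda>i. fa_diff (F i) (G i)) I = fa_diff (fa_sum F I) (fa_sum G I)"
  by (rule ext) (simp add: fa_sum_def fa_diff_def sum_subtractf)

lemma fa_sum_swap: "fa_sum (\<lambda>i. fa_sum (F i) J) I = fa_sum (\<lambda>j. fa_sum (\<lambda>i. F i j) I) J"
  by (rule ext) (simp add: fa_sum_def sum.swap[where A=I])

lemma fa_sum_group:
  assumes "finite S" "finite T" "g ` S \<subseteq> T"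
  shows "fa_sum (\<lambda>y. fa_sum F {x \<in> S. g x = y}) T = fa_sum F S"
  unfolding fa_sum_def by (rule ext, rule sum.group[OF assms])

lemma fa_sum_split_diagonal:
  assumes "finite I"
  shows "fa_sum (\<lambda>i. fa_sum (F i) I) I = fa_sum (\<lambda>i. fa_add (F i i) (fa_sum (F i) (I - {i}))) I"
  unfolding fa_sum_def fa_add_def by (rule ext, rule sum.cong) (simp_all add: sum.remove[OF assms])

lemma fa_sum_of_coeffs:
  assumes "finite {w. f w \<noteq> 0}"
  shows "fa_sum (\<lambda>u. fa_smult (f u) (fa_word u)) {w. f w \<noteq> 0} = f"
proof (rule ext)
  fix x
  have "fa_sum (\<lambda>u. fa_smult (f u) (fa_word u)) {w. f w \<noteq> 0} x
      = (\<Sum>u\<in>{w. f w \<noteq> 0}. if u = x then f u else 0)"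
    unfolding fa_sum_def fa_smult_def fa_word_def by (rule sum.cong) auto
  also have "\<dots> = f x" using assms by (simp add: sum.delta)
  finally show "fa_sum (\<lambda>u. fa_smult (f u) (fa_word u)) {w. f w \<noteq> 0} x = f x" .
qed

subsection \<open>Supports\<close>

lemma fa_word_prod_Nil: "fa_word_prod img [] = fa_one"
  by (simp add: fa_word_prod_def)

lemma fa_word_prod_Cons: "fa_word_prod img (a # u) = fa_mult (img a) (fa_word_prod img u)"
  by (simp add: fa_word_prod_def)

lemma fa_carrier_mono: "S \<subseteq> T \<Longrightarrow> fa_carrier S \<subseteq> fa_carrier T"
  unfolding fa_carrier_def by blast

lemma fa_carrier_UNIV_I: "f \<in> fa_carrier S \<Longrightarrow> f \<in> fa_carrier UNIV"
  using fa_carrier_mono[OF subset_UNIV] by blast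

lemma fa_carrier_UNIV_finite: "f \<in> fa_carrier UNIV \<Longrightarrow> finite {w. f w \<noteq> 0}"
  by (simp add: fa_carrier_def)

lemma fa_carrier_zero: "fa_zero \<in> fa_carrier S"
  by (simp add: fa_carrier_def fa_zero_def)

lemma fa_carrier_word: "set u \<subseteq> S \<Longrightarrow> fa_word u \<in> fa_carrier S"
  by (auto simp: fa_carrier_def fa_word_def)

lemma fa_carrier_one: "fa_one \<in> fa_carrier S"
  by (simp add: fa_one_eq_word fa_carrier_word)

lemma fa_carrier_gen: "a \<in> S \<Longrightarrow> fa_gen a \<in> fa_carrier S"
  by (simp add: fa_gen_eq_word fa_carrier_word)

lemma fa_carrier_add:
  assumes f: "f \<in> fa_carrier S" and g: "g \<in> fa_carrier S"
  shows "fa_add f g \<in> fa_carrier S"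
proof -
  have "{w. fa_add f g w \<noteq> 0} \<subseteq> {w. f w \<noteq> 0} \<union> {w. g w \<noteq> 0}"
    by (auto simp: fa_add_def)
  moreover have "set w \<subseteq> S" if "fa_add f g w \<noteq> 0" for w
    using that f g by (cases "f w = 0") (auto simp: fa_add_def fa_carrier_def)
  ultimately show ?thesis using f g unfolding fa_carrier_def by (auto intro: finite_subset)
qed

lemma fa_carrier_smult: "f \<in> fa_carrier S \<Longrightarrow> fa_smult c f \<in> fa_carrier S"
  unfolding fa_carrier_def fa_smult_def by (auto elim!: finite_subset[rotated])

lemma fa_carrier_diff: "f \<in> fa_carrier S \<Longrightarrow> g \<in> fa_carrier S \<Longrightarrow> fa_diff f g \<in> fa_carrier S"
  by (simp add: fa_diff_eq_add_smult fa_carrier_add fa_carrier_smult)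

lemma fa_carrier_sum:
  assumes F: "\<And>i. i \<in> I \<Longrightarrow> F i \<in> fa_carrier S"
  shows "fa_sum F I \<in> fa_carrier S"
proof (cases "finite I")
  case True
  have "{w. fa_sum F I w \<noteq> 0} \<subseteq> (\<Union>i\<in>I. {w. F i w \<noteq> 0})"
    unfolding fa_sum_def by (auto dest: sum.not_neutral_contains_not_neutral)
  moreover have "finite (\<Union>i\<in>I. {w. F i w \<noteq> 0})"
    using True F by (auto simp: fa_carrier_def)
  moreover have "set w \<subseteq> S" if "fa_sum F I w \<noteq> 0" for w
    using that F unfolding fa_sum_def fa_carrier_def
    by (auto dest: sum.not_neutral_contains_not_neutral)
  ultimately show ?thesis unfolding fa_carrier_def by (auto intro: finite_subset)
next
  case False
  then show ?thesis by (simp add: fa_sum_def fa_carrier_def)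
qed

lemma fa_carrier_mult:
  assumes f: "f \<in> fa_carrier S" and g: "g \<in> fa_carrier S"
  shows "fa_mult f g \<in> fa_carrier S"
proof -
  have factor: "\<exists>i. f (take i w) \<noteq> 0 \<and> g (drop i w) \<noteq> 0" if "fa_mult f g w \<noteq> 0" for w
    using that unfolding fa_mult_def by (auto dest: sum.not_neutral_contains_not_neutral)
  have "{w. fa_mult f g w \<noteq> 0} \<subseteq> (\<lambda>(u, v). u @ v) ` ({w. f w \<noteq> 0} \<times> {w. g w \<noteq> 0})"
  proof
    fix w assume "w \<in> {w. fa_mult f g w \<noteq> 0}"
    then obtain i where "f (take i w) \<noteq> 0" "g (drop i w) \<noteq> 0" using factor by blast
    then show "w \<in> (\<lambda>(u, v). u @ v) ` ({w. f w \<noteq> 0} \<times> {w. g w \<noteq> 0})"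
      by (intro image_eqI[of _ _ "(take i w, drop i w)"]) auto
  qed
  moreover have "finite ((\<lambda>(u, v). u @ v) ` ({w. f w \<noteq> 0} \<times> {w. g w \<noteq> 0}))"
    using f g by (auto simp: fa_carrier_def)
  moreover have "set w \<subseteq> S" if nonzero: "fa_mult f g w \<noteq> 0" for w
  proof -
    obtain i where "f (take i w) \<noteq> 0" "g (drop i w) \<noteq> 0" using factor[OF nonzero] by blast
    then have "set (take i w) \<subseteq> S" "set (drop i w) \<subseteq> S" using f g by (auto simp: fa_carrier_def)
    then show ?thesis by (metis append_take_drop_id le_sup_iff set_append)
  qed
  ultimately show ?thesis unfolding fa_carrier_def by (auto intro: finite_subset)
qed

lemma fa_carrier_word_prod:
  "(\<And>a. a \<in> S \<Longrightarrow> img a \<in> fa_carrier T) \<Longrightarrow> set u \<subseteq> S \<Longrightarrow> fa_word_prod img u \<in> fa_carrier T"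
  by (induction u) (auto simp: fa_word_prod_Nil fa_word_prod_Cons fa_carrier_one fa_carrier_mult)

lemma fa_carrier_extend:
  assumes f: "f \<in> fa_carrier S" and img: "\<And>a. a \<in> S \<Longrightarrow> img a \<in> fa_carrier T"
  shows "fa_extend img f \<in> fa_carrier T"
  unfolding fa_extend_def
proof (intro fa_carrier_sum fa_carrier_smult fa_carrier_word_prod)
  show "img a \<in> fa_carrier T" if "a \<in> S" for a using that by (rule img)
  show "set w \<subseteq> S" if "w \<in> {w. f w \<noteq> 0}" for w using that f by (auto simp: fa_carrier_def)
qed

subsection \<open>The homomorphism determined by the images of the generators\<close>

lemma fa_word_prod_append:
  "fa_word_prod img (u @ v) = fa_mult (fa_word_prod img u) (fa_word_prod img v)"
  by (induction u) (simp_all add: fa_word_prod_def fa_mult_one_left fa_mult_assoc)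

lemma fa_word_prod_gen: "fa_word_prod fa_gen u = fa_word u"
  by (induction u) (simp_all add: fa_word_prod_def fa_one_eq_word fa_gen_eq_word fa_mult_word)

lemma fa_word_prod_cong:
  "(\<And>a. a \<in> S \<Longrightarrow> img a = img' a) \<Longrightarrow> set u \<subseteq> S \<Longrightarrow> fa_word_prod img u = fa_word_prod img' u"
  by (induction u) (simp_all add: fa_word_prod_def)

lemma fa_extend_eq_sum:
  assumes "finite S" "{w. f w \<noteq> 0} \<subseteq> S"
  shows "fa_extend img f = fa_sum (\<lambda>w. fa_smult (f w) (fa_word_prod img w)) S"
  unfolding fa_extend_def fa_sum_def fa_smult_def
  by (rule ext, rule sum.mono_neutral_left) (use assms in auto)

lemma fa_extend_add:
  assumes f: "f \<in> fa_carrier UNIV" and g: "g \<in> fa_carrier UNIV"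
  shows "fa_extend img (fa_add f g) = fa_add (fa_extend img f) (fa_extend img g)"
proof -
  let ?S = "{w. f w \<noteq> 0} \<union> {w. g w \<noteq> 0}"
  have S: "finite ?S" using f g by (simp add: fa_carrier_def)
  have "fa_extend img (fa_add f g) = fa_sum (\<lambda>w. fa_smult (fa_add f g w) (fa_word_prod img w)) ?S"
    by (rule fa_extend_eq_sum[OF S]) (auto simp: fa_add_def)
  moreover have "fa_extend img f = fa_sum (\<lambda>w. fa_smult (f w) (fa_word_prod img w)) ?S"
    by (rule fa_extend_eq_sum[OF S]) auto
  moreover have "fa_extend img g = fa_sum (\<lambda>w. fa_smult (g w) (fa_word_prod img w)) ?S"
    by (rule fa_extend_eq_sum[OF S]) auto
  ultimately show ?thesis
    by (simp add: fa_sum_def fa_add_def fa_smult_def distrib_right sum.distrib)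
qed

lemma fa_extend_smult:
  assumes f: "f \<in> fa_carrier UNIV"
  shows "fa_extend img (fa_smult c f) = fa_smult c (fa_extend img f)"
proof -
  let ?S = "{w. f w \<noteq> 0}"
  have S: "finite ?S" using f by (simp add: fa_carrier_def)
  have "fa_extend img (fa_smult c f) = fa_sum (\<lambda>w. fa_smult (fa_smult c f w) (fa_word_prod img w)) ?S"
    by (rule fa_extend_eq_sum[OF S]) (auto simp: fa_smult_def)
  then show ?thesis
    by (simp add: fa_extend_def fa_sum_def fa_smult_def sum_distrib_left mult.assoc)
qed

lemma fa_extend_diff:
  assumes "f \<in> fa_carrier UNIV" "g \<in> fa_carrier UNIV"
  shows "fa_extend img (fa_diff f g) = fa_diff (fa_extend img f) (fa_extend img g)"
  using assms by (simp add: fa_diff_eq_add_smult fa_extend_add fa_extend_smult fa_carrier_smult)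

lemma fa_extend_zero: "fa_extend img fa_zero = fa_zero"
  by (simp add: fa_extend_def fa_zero_def fa_sum_def)

lemma fa_extend_sum:
  assumes "finite I" "\<And>i. i \<in> I \<Longrightarrow> F i \<in> fa_carrier UNIV"
  shows "fa_extend img (fa_sum F I) = fa_sum (\<lambda>i. fa_extend img (F i)) I"
  using assms
proof (induction I rule: finite_induct)
  case empty
  then show ?case by (simp add: fa_sum_empty fa_extend_zero)
next
  case (insert i I)
  then show ?case by (simp add: fa_sum_insert fa_extend_add fa_carrier_sum)
qed

lemma fa_extend_word: "fa_extend img (fa_word u) = fa_word_prod img u"
proof -
  have "fa_extend img (fa_word u) = fa_sum (\<lambda>w. fa_smult (fa_word u w) (fa_word_prod img w)) {u}"
    by (rule fa_extend_eq_sum) (auto simp: fa_word_def)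
  then show ?thesis by (simp add: fa_sum_def fa_smult_def fa_word_def)
qed

lemma fa_extend_one: "fa_extend img fa_one = fa_one"
  by (simp add: fa_one_eq_word fa_extend_word fa_word_prod_def)

lemma fa_extend_gen: "fa_extend img (fa_gen a) = img a"
  by (simp add: fa_gen_eq_word fa_extend_word fa_word_prod_def fa_mult_one_right)

lemma fa_extend_mult:
  assumes f: "f \<in> fa_carrier UNIV" and g: "g \<in> fa_carrier UNIV"
  shows "fa_extend img (fa_mult f g) = fa_mult (fa_extend img f) (fa_extend img g)"
proof -
  let ?Sf = "{w. f w \<noteq> 0}" and ?Sg = "{w. g w \<noteq> 0}"
  have Sf: "finite ?Sf" and Sg: "finite ?Sg" using f g by (auto simp: fa_carrier_def)
  have "fa_mult f g = fa_mult (fa_sum (\<lambda>u. fa_smult (f u) (fa_word u)) ?Sf)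
                              (fa_sum (\<lambda>u. fa_smult (g u) (fa_word u)) ?Sg)"
    using Sf Sg by (simp add: fa_sum_of_coeffs)
  also have "\<dots> = fa_sum (\<lambda>v. fa_sum (\<lambda>u. fa_smult (f u * g v) (fa_word (u @ v))) ?Sf) ?Sg"
    by (simp add: fa_smult_sum fa_mult_sum_left fa_mult_sum_right fa_mult_smult_left
        fa_mult_smult_right fa_mult_word fa_smult_smult mult.commute)
  finally have "fa_extend img (fa_mult f g) =
      fa_sum (\<lambda>v. fa_sum (\<lambda>u. fa_smult (f u * g v) (fa_word_prod img (u @ v))) ?Sf) ?Sg"
    using Sf Sg
    by (simp add: fa_extend_sum fa_extend_smult fa_extend_word fa_carrier_sum fa_carrier_smult
        fa_carrier_word)
  also have "\<dots> = fa_mult (fa_sum (\<lambda>u. fa_smult (f u) (fa_word_prod img u)) ?Sf)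
                          (fa_sum (\<lambda>u. fa_smult (g u) (fa_word_prod img u)) ?Sg)"
    by (simp add: fa_smult_sum fa_mult_sum_left fa_mult_sum_right fa_mult_smult_left
        fa_mult_smult_right fa_word_prod_append fa_smult_smult mult.commute)
  finally show ?thesis by (simp add: fa_extend_def)
qed

lemma fa_extend_word_prod:
  assumes "\<And>a. img a \<in> fa_carrier UNIV"
  shows "fa_extend img' (fa_word_prod img u) = fa_word_prod (\<lambda>a. fa_extend img' (img a)) u"
  by (induction u)
     (simp_all add: fa_word_prod_Nil fa_word_prod_Cons fa_extend_one fa_extend_mult assms
       fa_carrier_word_prod[where S=UNIV])

lemma fa_extend_fa_extend:
  assumes f: "f \<in> fa_carrier UNIV" and img: "\<And>a. img a \<in> fa_carrier UNIV"
  shows "fa_extend img' (fa_extend img f) = fa_extend (\<lambda>a. fa_extend img' (img a)) f"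
  unfolding fa_extend_def[of img] fa_extend_def[of "\<lambda>a. fa_extend img' (img a)"]
  using fa_carrier_UNIV_finite[OF f] img
  by (simp add: fa_extend_sum fa_extend_smult fa_extend_word_prod fa_carrier_smult
      fa_carrier_word_prod[where S=UNIV])

lemma fa_extend_cong:
  assumes f: "f \<in> fa_carrier S" and img: "\<And>a. a \<in> S \<Longrightarrow> img a = img' a"
  shows "fa_extend img f = fa_extend img' f"
  unfolding fa_extend_def fa_sum_def
  by (rule ext, rule sum.cong[OF refl])
     (use f img fa_word_prod_cong[of S img img'] in \<open>auto simp: fa_carrier_def\<close>)

lemma fa_extend_gen_id: "f \<in> fa_carrier UNIV \<Longrightarrow> fa_extend fa_gen f = f"
  unfolding fa_extend_def fa_word_prod_gen by (simp add: fa_sum_of_coeffs fa_carrier_def)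

subsection \<open>The defining ideal\<close>

lemma lc_ideal_sum:
  "finite I \<Longrightarrow> (\<And>i. i \<in> I \<Longrightarrow> F i \<in> lc_ideal G H) \<Longrightarrow> fa_sum F I \<in> lc_ideal G H"
  by (induction I rule: finite_induct)
     (simp_all add: fa_sum_empty fa_sum_insert lc_ideal.zero lc_ideal.add)

lemma lc_ideal_partition:
  "v \<in> verts G \<Longrightarrow> fa_diff (fa_sum (\<lambda>x. fa_gen (v, x)) (verts H)) fa_one \<in> lc_ideal G H"
  by (rule lc_ideal.rel) (auto simp: lc_relators_def)

lemma lc_ideal_idempotent:
  "v \<in> verts G \<Longrightarrow> x \<in> verts H
    \<Longrightarrow> fa_diff (fa_mult (fa_gen (v, x)) (fa_gen (v, x))) (fa_gen (v, x)) \<in> lc_ideal G H"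
  by (rule lc_ideal.rel) (auto simp: lc_relators_def)

lemma lc_ideal_orthogonal:
  "v \<in> verts G \<Longrightarrow> x \<in> verts H \<Longrightarrow> y \<in> verts H \<Longrightarrow> x \<noteq> y
    \<Longrightarrow> fa_mult (fa_gen (v, x)) (fa_gen (v, y)) \<in> lc_ideal G H"
  by (rule lc_ideal.rel) (auto simp: lc_relators_def)

lemma lc_ideal_non_edge:
  "adj G v w \<Longrightarrow> x \<in> verts H \<Longrightarrow> y \<in> verts H \<Longrightarrow> \<not> adj H x y
    \<Longrightarrow> fa_mult (fa_gen (v, x)) (fa_gen (w, y)) \<in> lc_ideal G H"
  by (rule lc_ideal.rel) (auto simp: lc_relators_def)

lemma lc_ideal_commute:
  "adj G v w \<Longrightarrow> x \<in> verts H \<Longrightarrow> y \<in> verts H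
    \<Longrightarrow> fa_diff (fa_mult (fa_gen (v, x)) (fa_gen (w, y))) (fa_mult (fa_gen (w, y)) (fa_gen (v, x)))
          \<in> lc_ideal G H"
  by (rule lc_ideal.rel) (auto simp: lc_relators_def)

lemma lc_relators_finite_support: "r \<in> lc_relators G H \<Longrightarrow> r \<in> fa_carrier UNIV"
  unfolding lc_relators_def
  by (elim UnE CollectE exE conjE; simp only:;
      intro fa_carrier_diff fa_carrier_sum fa_carrier_gen fa_carrier_one fa_carrier_mult; simp)

lemma lc_ideal_finite_support: "f \<in> lc_ideal G H \<Longrightarrow> f \<in> fa_carrier UNIV"
  by (induction rule: lc_ideal.induct)
     (auto intro: lc_relators_finite_support fa_carrier_zero fa_carrier_add fa_carrier_smult
       fa_carrier_mult fa_carrier_UNIV_I)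

lemma lc_equiv_refl: "lc_equiv G H f f"
  by (simp add: lc_equiv_def fa_diff_self lc_ideal.zero)

subsection \<open>The induced map\<close>

definition lc_gen_image :: "'h2 graph \<Rightarrow> ('g1 \<Rightarrow> 'g2) \<Rightarrow> ('h2 \<Rightarrow> 'h1) \<Rightarrow> 'g1 \<Rightarrow> 'h1
     \<Rightarrow> ('g2 \<times> 'h2) fa" where
  "lc_gen_image H' \<phi> \<psi> v x = fa_sum (\<lambda>y. fa_gen (\<phi> v, y)) {y \<in> verts H'. \<psi> y = x}"

lemma lc_map_eq_extend: "lc_map H' \<phi> \<psi> = fa_extend (\<lambda>(v, x). lc_gen_image H' \<phi> \<psi> v x)"
  by (simp add: lc_map_def lc_gen_image_def)

lemma lc_gen_image_finite_support: "lc_gen_image H' \<phi> \<psi> v x \<in> fa_carrier UNIV"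
  unfolding lc_gen_image_def by (intro fa_carrier_sum fa_carrier_gen) simp

lemma lc_map_gen: "lc_map H' \<phi> \<psi> (fa_gen (v, x)) = lc_gen_image H' \<phi> \<psi> v x"
  by (simp add: lc_map_eq_extend fa_extend_gen)

lemma lc_map_one: "lc_map H' \<phi> \<psi> fa_one = fa_one"
  by (simp add: lc_map_eq_extend fa_extend_one)

lemma lc_map_add:
  "f \<in> fa_carrier UNIV \<Longrightarrow> g \<in> fa_carrier UNIV
    \<Longrightarrow> lc_map H' \<phi> \<psi> (fa_add f g) = fa_add (lc_map H' \<phi> \<psi> f) (lc_map H' \<phi> \<psi> g)"
  by (simp add: lc_map_eq_extend fa_extend_add)

lemma lc_map_smult:
  "f \<in> fa_carrier UNIV \<Longrightarrow> lc_map H' \<phi> \<psi> (fa_smult c f) = fa_smult c (lc_map H' \<phi> \<psi> f)"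
  by (simp add: lc_map_eq_extend fa_extend_smult)

lemma lc_map_diff:
  "f \<in> fa_carrier UNIV \<Longrightarrow> g \<in> fa_carrier UNIV
    \<Longrightarrow> lc_map H' \<phi> \<psi> (fa_diff f g) = fa_diff (lc_map H' \<phi> \<psi> f) (lc_map H' \<phi> \<psi> g)"
  by (simp add: lc_map_eq_extend fa_extend_diff)

lemma lc_map_mult:
  "f \<in> fa_carrier UNIV \<Longrightarrow> g \<in> fa_carrier UNIV
    \<Longrightarrow> lc_map H' \<phi> \<psi> (fa_mult f g) = fa_mult (lc_map H' \<phi> \<psi> f) (lc_map H' \<phi> \<psi> g)"
  by (simp add: lc_map_eq_extend fa_extend_mult)

lemma lc_map_sum:
  "finite I \<Longrightarrow> (\<And>i. i \<in> I \<Longrightarrow> F i \<in> fa_carrier UNIV)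
    \<Longrightarrow> lc_map H' \<phi> \<psi> (fa_sum F I) = fa_sum (\<lambda>i. lc_map H' \<phi> \<psi> (F i)) I"
  by (simp add: lc_map_eq_extend fa_extend_sum)

lemma lc_map_gen_mult:
  "lc_map H' \<phi> \<psi> (fa_mult (fa_gen (v, x)) (fa_gen (w, y)))
    = fa_sum (\<lambda>a. fa_sum (\<lambda>b. fa_mult (fa_gen (\<phi> v, a)) (fa_gen (\<phi> w, b)))
        {b \<in> verts H'. \<psi> b = y}) {a \<in> verts H'. \<psi> a = x}"
  by (simp add: lc_map_mult fa_carrier_gen lc_map_gen lc_gen_image_def fa_mult_sum_sum)

lemma lc_map_carrier:
  assumes "graph_hom \<phi> G G'" "f \<in> fa_carrier (verts G \<times> verts H)"
  shows "lc_map H' \<phi> \<psi> f \<in> fa_carrier (verts G' \<times> verts H')"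
  unfolding lc_map_eq_extend
proof (rule fa_carrier_extend[OF assms(2)])
  fix a assume "a \<in> verts G \<times> verts H"
  with assms(1) have "\<phi> (fst a) \<in> verts G'" by (auto simp: graph_hom_def)
  then show "(\<lambda>(v, x). lc_gen_image H' \<phi> \<psi> v x) a \<in> fa_carrier (verts G' \<times> verts H')"
    unfolding lc_gen_image_def by (cases a) (auto intro!: fa_carrier_sum fa_carrier_gen)
qed

context
  fixes G :: "'g graph" and G' :: "'g' graph" and H :: "'h graph" and H' :: "'h' graph"
    and \<phi> :: "'g \<Rightarrow> 'g'" and \<psi> :: "'h' \<Rightarrow> 'h"
  assumes hom_\<phi>: "graph_hom \<phi> G G'" and hom_\<psi>: "graph_hom \<psi> H' H"
    and finite_H: "finite (verts H)" and finite_H': "finite (verts H')"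
begin

lemma lc_map_partition:
  assumes "v \<in> verts G"
  shows "lc_map H' \<phi> \<psi> (fa_diff (fa_sum (\<lambda>x. fa_gen (v, x)) (verts H)) fa_one) \<in> lc_ideal G' H'"
proof -
  have "fa_sum (lc_gen_image H' \<phi> \<psi> v) (verts H) = fa_sum (\<lambda>y. fa_gen (\<phi> v, y)) (verts H')"
    unfolding lc_gen_image_def
    by (rule fa_sum_group[OF finite_H' finite_H]) (use hom_\<psi> in \<open>auto simp: graph_hom_def\<close>)
  moreover have "\<phi> v \<in> verts G'" using hom_\<phi> assms by (simp add: graph_hom_def)
  ultimately show ?thesis
    by (simp add: lc_map_diff lc_map_sum lc_map_gen lc_map_one finite_H fa_carrier_gen
        fa_carrier_sum fa_carrier_one lc_ideal_partition)
qed

lemma lc_map_idempotent: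
  assumes "v \<in> verts G"
  shows "lc_map H' \<phi> \<psi> (fa_diff (fa_mult (fa_gen (v, x)) (fa_gen (v, x))) (fa_gen (v, x)))
    \<in> lc_ideal G' H'"
proof -
  let ?A = "{y \<in> verts H'. \<psi> y = x}" and ?e = "\<lambda>a. fa_gen (\<phi> v, a)"
  have A: "finite ?A" using finite_H' by simp
  have "lc_map H' \<phi> \<psi> (fa_diff (fa_mult (fa_gen (v, x)) (fa_gen (v, x))) (fa_gen (v, x)))
      = fa_diff (fa_sum (\<lambda>a. fa_sum (\<lambda>b. fa_mult (?e a) (?e b)) ?A) ?A) (fa_sum ?e ?A)"
    by (simp add: lc_map_diff fa_carrier_mult fa_carrier_gen lc_map_gen_mult lc_map_gen
        lc_gen_image_def)
  also have "\<dots> = fa_sum (\<lambda>a. fa_add (fa_diff (fa_mult (?e a) (?e a)) (?e a))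
                      (fa_sum (\<lambda>b. fa_mult (?e a) (?e b)) (?A - {a}))) ?A"
    unfolding fa_sum_split_diagonal[OF A] fa_sum_diff[symmetric]
    by (rule ext) (simp add: fa_sum_def fa_diff_def fa_add_def algebra_simps)
  also have "\<dots> \<in> lc_ideal G' H'"
    using hom_\<phi> assms finite_H'
    by (intro lc_ideal_sum lc_ideal.add lc_ideal_idempotent lc_ideal_orthogonal)
       (auto simp: graph_hom_def)
  finally show ?thesis .
qed

lemma lc_map_orthogonal:
  assumes "v \<in> verts G" "x \<noteq> y"
  shows "lc_map H' \<phi> \<psi> (fa_mult (fa_gen (v, x)) (fa_gen (v, y))) \<in> lc_ideal G' H'"
  unfolding lc_map_gen_mult using hom_\<phi> assms finite_H'
  by (intro lc_ideal_sum lc_ideal_orthogonal) (auto simp: graph_hom_def)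

lemma lc_map_non_edge:
  assumes "adj G v w" "x \<in> verts H" "y \<in> verts H" "\<not> adj H x y"
  shows "lc_map H' \<phi> \<psi> (fa_mult (fa_gen (v, x)) (fa_gen (w, y))) \<in> lc_ideal G' H'"
  unfolding lc_map_gen_mult using hom_\<phi> hom_\<psi> assms finite_H'
  by (intro lc_ideal_sum lc_ideal_non_edge) (auto simp: graph_hom_def)

lemma lc_map_commute:
  assumes "adj G v w"
  shows "lc_map H' \<phi> \<psi> (fa_diff (fa_mult (fa_gen (v, x)) (fa_gen (w, y)))
                                 (fa_mult (fa_gen (w, y)) (fa_gen (v, x)))) \<in> lc_ideal G' H'"
proof -
  let ?A = "{a \<in> verts H'. \<psi> a = x}" and ?B = "{b \<in> verts H'. \<psi> b = y}"
  have "lc_map H' \<phi> \<psi> (fa_diff (fa_mult (fa_gen (v, x)) (fa_gen (w, y)))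
                                 (fa_mult (fa_gen (w, y)) (fa_gen (v, x))))
      = fa_sum (\<lambda>a. fa_sum (\<lambda>b. fa_diff (fa_mult (fa_gen (\<phi> v, a)) (fa_gen (\<phi> w, b)))
          (fa_mult (fa_gen (\<phi> w, b)) (fa_gen (\<phi> v, a)))) ?B) ?A"
    by (simp add: lc_map_diff fa_carrier_mult fa_carrier_gen lc_map_gen_mult fa_sum_diff
        fa_sum_swap[of _ ?B ?A])
  also have "\<dots> \<in> lc_ideal G' H'"
    using hom_\<phi> assms finite_H'
    by (intro lc_ideal_sum lc_ideal_commute) (auto simp: graph_hom_def)
  finally show ?thesis .
qed

lemma lc_map_relator: "r \<in> lc_relators G H \<Longrightarrow> lc_map H' \<phi> \<psi> r \<in> lc_ideal G' H'"
  unfolding lc_relators_def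
  by (elim UnE CollectE exE conjE; simp only:)
     (auto intro: lc_map_partition lc_map_idempotent lc_map_orthogonal lc_map_non_edge
       lc_map_commute)

lemma lc_map_ideal: "f \<in> lc_ideal G H \<Longrightarrow> lc_map H' \<phi> \<psi> f \<in> lc_ideal G' H'"
proof (induction rule: lc_ideal.induct)
  case (rel r)
  then show ?case by (rule lc_map_relator)
next
  case zero
  then show ?case by (simp add: lc_map_eq_extend fa_extend_zero lc_ideal.zero)
next
  case (add f g)
  then show ?case by (simp add: lc_map_add lc_ideal_finite_support lc_ideal.add)
next
  case (smult f c)
  then show ?case by (simp add: lc_map_smult lc_ideal_finite_support lc_ideal.smult)
next
  case (lmult a f)
  then show ?case
    by (simp add: lc_map_mult fa_carrier_UNIV_I lc_ideal_finite_support lc_ideal.lmult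
        lc_map_carrier[OF hom_\<phi>])
next
  case (rmult a f)
  then show ?case
    by (simp add: lc_map_mult fa_carrier_UNIV_I lc_ideal_finite_support lc_ideal.rmult
        lc_map_carrier[OF hom_\<phi>])
qed

end

lemma lc_map_id:
  assumes "f \<in> fa_carrier (verts G \<times> verts H)"
  shows "lc_map H id id f = f"
proof -
  have "lc_map H id id f = fa_extend fa_gen f"
    unfolding lc_map_eq_extend
  proof (rule fa_extend_cong[OF assms])
    fix a assume "a \<in> verts G \<times> verts H"
    then have "{y \<in> verts H. y = snd a} = {snd a}" by auto
    then show "(\<lambda>(v, x). lc_gen_image H id id v x) a = fa_gen a"
      by (cases a) (simp add: lc_gen_image_def fa_sum_def)
  qed
  also have "\<dots> = f" by (rule fa_extend_gen_id[OF fa_carrier_UNIV_I[OF assms]])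
  finally show ?thesis .
qed

lemma lc_map_gen_image:
  assumes "finite (verts H2)" "finite (verts H3)" "graph_hom \<psi>2 H3 H2"
  shows "lc_map H3 \<phi>2 \<psi>2 (lc_gen_image H2 \<phi>1 \<psi>1 v x) = lc_gen_image H3 (\<phi>2 \<circ> \<phi>1) (\<psi>1 \<circ> \<psi>2) v x"
proof -
  have "lc_map H3 \<phi>2 \<psi>2 (lc_gen_image H2 \<phi>1 \<psi>1 v x)
      = fa_sum (\<lambda>y. fa_sum (\<lambda>z. fa_gen (\<phi>2 (\<phi>1 v), z)) {z \<in> verts H3. \<psi>2 z = y})
          {y \<in> verts H2. \<psi>1 y = x}"
    using assms(1) by (simp add: lc_gen_image_def lc_map_sum fa_carrier_gen lc_map_gen)
  also have "\<dots> = fa_sum (\<lambda>y. fa_sum (\<lambda>z. fa_gen (\<phi>2 (\<phi>1 v), z))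
                     {z \<in> {z \<in> verts H3. \<psi>1 (\<psi>2 z) = x}. \<psi>2 z = y}) {y \<in> verts H2. \<psi>1 y = x}"
    unfolding fa_sum_def by (intro ext sum.cong refl) auto
  also have "\<dots> = fa_sum (\<lambda>z. fa_gen (\<phi>2 (\<phi>1 v), z)) {z \<in> verts H3. \<psi>1 (\<psi>2 z) = x}"
    by (rule fa_sum_group) (use assms in \<open>auto simp: graph_hom_def\<close>)
  finally show ?thesis by (simp add: lc_gen_image_def)
qed

lemma lc_map_comp:
  assumes "finite (verts H2)" "finite (verts H3)" "graph_hom \<psi>2 H3 H2"
    and f: "f \<in> fa_carrier UNIV"
  shows "lc_map H3 \<phi>2 \<psi>2 (lc_map H2 \<phi>1 \<psi>1 f) = lc_map H3 (\<phi>2 \<circ> \<phi>1) (\<psi>1 \<circ> \<psi>2) f"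
proof -
  have "lc_map H3 \<phi>2 \<psi>2 (lc_map H2 \<phi>1 \<psi>1 f)
      = fa_extend (\<lambda>a. lc_map H3 \<phi>2 \<psi>2 (case a of (v, x) \<Rightarrow> lc_gen_image H2 \<phi>1 \<psi>1 v x)) f"
    unfolding lc_map_eq_extend[of H2] lc_map_eq_extend[of H3 \<phi>2 \<psi>2]
    by (rule fa_extend_fa_extend[OF f]) (simp add: lc_gen_image_finite_support split: prod.split)
  also have "(\<lambda>a. lc_map H3 \<phi>2 \<psi>2 (case a of (v, x) \<Rightarrow> lc_gen_image H2 \<phi>1 \<psi>1 v x))
      = (\<lambda>(v, x). lc_gen_image H3 (\<phi>2 \<circ> \<phi>1) (\<psi>1 \<circ> \<psi>2) v x)"
    by (rule ext) (simp add: lc_map_gen_image[OF assms(1-3)] split: prod.split)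
  finally show ?thesis by (simp add: lc_map_eq_extend)
qed

theorem mainTheorem8:
  fixes G1 :: "'g1 graph" and G2 :: "'g2 graph" and G3 :: "'g3 graph"
    and H1 :: "'h1 graph" and H2 :: "'h2 graph" and H3 :: "'h3 graph"
    and \<phi>1 :: "'g1 \<Rightarrow> 'g2" and \<phi>2 :: "'g2 \<Rightarrow> 'g3"
    and \<psi>1 :: "'h2 \<Rightarrow> 'h1" and \<psi>2 :: "'h3 \<Rightarrow> 'h2"
  assumes "is_graph G1" "is_graph G2" "is_graph G3"
    and "is_graph H1" "is_graph H2" "is_graph H3"
    and "graph_hom \<phi>1 G1 G2" "graph_hom \<phi>2 G2 G3"
    and "graph_hom \<psi>1 H2 H1" "graph_hom \<psi>2 H3 H2"
  shows
    \<comment> \<open>the morphism (phi1, psi1) induces a unital algebra hom A_lc(G1,H1) -> A_lc(G2,H2)\<close>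
    "(\<forall>f \<in> fa_carrier (verts G1 \<times> verts H1).
        lc_map H2 \<phi>1 \<psi>1 f \<in> fa_carrier (verts G2 \<times> verts H2))
   \<and> (\<forall>f \<in> lc_ideal G1 H1. lc_map H2 \<phi>1 \<psi>1 f \<in> lc_ideal G2 H2)
   \<and> lc_map H2 \<phi>1 \<psi>1 fa_one = fa_one
   \<and> (\<forall>f \<in> fa_carrier (verts G1 \<times> verts H1). \<forall>g \<in> fa_carrier (verts G1 \<times> verts H1).
        lc_map H2 \<phi>1 \<psi>1 (fa_add f g) = fa_add (lc_map H2 \<phi>1 \<psi>1 f) (lc_map H2 \<phi>1 \<psi>1 g)
      \<and> lc_map H2 \<phi>1 \<psi>1 (fa_mult f g) = fa_mult (lc_map H2 \<phi>1 \<psi>1 f) (lc_map H2 \<phi>1 \<psi>1 g))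
   \<and> (\<forall>c. \<forall>f \<in> fa_carrier (verts G1 \<times> verts H1).
        lc_map H2 \<phi>1 \<psi>1 (fa_smult c f) = fa_smult c (lc_map H2 \<phi>1 \<psi>1 f))
    \<comment> \<open>identities go to identities\<close>
   \<and> (\<forall>f \<in> fa_carrier (verts G1 \<times> verts H1). lc_equiv G1 H1 (lc_map H1 id id f) f)
    \<comment> \<open>composition: (phi2, psi2) o (phi1, psi1) = (phi2 o phi1, psi1 o psi2)\<close>
   \<and> (\<forall>f \<in> fa_carrier (verts G1 \<times> verts H1).
        lc_equiv G3 H3 (lc_map H3 \<phi>2 \<psi>2 (lc_map H2 \<phi>1 \<psi>1 f))
                       (lc_map H3 (\<phi>2 \<circ> \<phi>1) (\<psi>1 \<circ> \<psi>2) f))"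
proof -
  have finite: "finite (verts H1)" "finite (verts H2)" "finite (verts H3)"
    using assms(4-6) by (simp_all add: is_graph_def)
  have finite_support: "\<And>f. f \<in> fa_carrier (verts G1 \<times> verts H1) \<Longrightarrow> f \<in> fa_carrier UNIV"
    by (rule fa_carrier_UNIV_I)
  show ?thesis
    by (simp add: lc_map_carrier[OF assms(7)] lc_map_ideal[OF assms(7,9) finite(1,2)]
        lc_map_one lc_map_add lc_map_mult lc_map_smult finite_support
        lc_map_id lc_map_comp[OF finite(2,3) assms(10)] lc_equiv_refl)
qed

end
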